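(* Let $q\ge5$ be an integer coprime to $6$ and let $b$ be the inverse of $2$ modulo $q$. For any prime $p\mid q$, $$\sum_{d\ (\mathrm{mod}\ p)}\left(\frac{d(d+1)(d+2)(d+3)}{p}\right)=-(\Delta_p+1),$$ where $\Delta_p:=p+1-\#E_{3b^2}(\mathbb{F}_p)$.
   Context: $\left(\frac{\cdot}{p}\right)$ is the Legendre symbol. For $\lambda\in\mathbb{F}_p$, $E_\lambda/\mathbb{F}_p$ is the curve with Legendre model $y^2=x(x-1)(x-\lambda)$, and $\#E_\lambda(\mathbb{F}_p)$ counts its $\mathbb{F}_p$-rational points including the point at infinity. *)

theory Defs
  imports "HOL-Number_Theory.Number_Theory"
begin

text \<open>Number of F_p-rational points (including the point at infinity) of the
Legendre curve y^2 = x(x-1)(x-lambda) over F_p, where lambda is an integer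
representing an element of F_p = Z/pZ.\<close>
definition legendre_curve_card :: "int \<Rightarrow> int \<Rightarrow> nat" where
  "legendre_curve_card p lam =
     card {(x, y). x \<in> {0..<p} \<and> y \<in> {0..<p} \<and>
                   [y^2 = x * (x - 1) * (x - lam)] (mod p)} + 1"

end

theory Submission
  imports Defs
begin

text \<open>
  The substitution d = 1/x turns the quartic d(d+1)(d+2)(d+3) into x^{-4}(1+x)(1+2x)(1+3x), so the
  character sum over d \<noteq> 0 equals the cubic sum over x \<noteq> 0, in which the missing term x = 0
  contributes 1. The affine change of variables w = 3b(x+1), where 2b = 1, carries the cubic to
  (3b^2)^{-2} w(w-1)(w-3b^2), the Legendre form with lambda = 3b^2. Finally, each w contributes
  1 + (w(w-1)(w-3b^2) / p) points to the curve, so #E = p + 1 + \<Sum>_w (w(w-1)(w-3b^2) / p).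
\<close>

lemma Legendre_cong:
  assumes "[a = b] (mod p)"
  shows "Legendre a p = Legendre b p"
proof -
  have "[a = 0] (mod p) \<longleftrightarrow> [b = 0] (mod p)" and "QuadRes p a \<longleftrightarrow> QuadRes p b"
    unfolding QuadRes_def using assms cong_sym cong_trans by blast+
  then show ?thesis
    by (simp add: Legendre_def)
qed

lemma Legendre_one:
  fixes p :: int
  assumes "1 < p"
  shows "Legendre 1 p = 1"
  using assms by (auto simp: Legendre_def QuadRes_def cong_def intro: exI[of _ 1])

lemma Legendre_mult:
  fixes p :: int
  assumes "prime p" "2 < p"
  shows "Legendre (a * b) p = Legendre a p * Legendre b p"
proof -
  have euler: "[Legendre c p = c ^ ((nat p - 1) div 2)] (mod p)" for c
    using euler_criterion[of "nat p" c] assms by simp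
  have range: "Legendre c p \<in> {-1, 0, 1}" for c
    by (simp add: Legendre_def)
  have "[Legendre (a * b) p = Legendre a p * Legendre b p] (mod p)"
    using euler[of "a * b"] cong_mult[OF euler[of a] euler[of b]]
    by (metis cong_sym cong_trans power_mult_distrib)
  then have "[Legendre (a * b) p + 1 = Legendre a p * Legendre b p + 1] (mod p)"
    by (rule cong_add) simp
  moreover have "0 \<le> Legendre (a * b) p + 1" "Legendre (a * b) p + 1 < p"
    and "0 \<le> Legendre a p * Legendre b p + 1" "Legendre a p * Legendre b p + 1 < p"
    using range[of "a * b"] range[of a] range[of b] assms(2) by auto
  ultimately have "Legendre (a * b) p + 1 = Legendre a p * Legendre b p + 1"
    using cong_less_imp_eq_int by blast
  then show ?thesis
    by simp
qed

lemma Legendre_square_mult: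
  fixes p :: int
  assumes "prime p" "2 < p" "\<not> p dvd c"
  shows "Legendre (c^2 * a) p = Legendre a p"
proof -
  have "\<not> [c^2 = 0] (mod p)" and "QuadRes p (c^2)"
    using assms by (auto simp: cong_0_iff prime_dvd_power_iff QuadRes_def intro: exI[of _ c])
  then show ?thesis
    using Legendre_mult[OF assms(1,2)] by (simp add: Legendre_def)
qed

lemma card_square_roots_mod_prime:
  fixes p :: int
  assumes "prime p" "2 < p"
  shows "int (card {y \<in> {0..<p}. [y^2 = a] (mod p)}) = 1 + Legendre a p"
proof (cases "[a = 0] (mod p)")
  case True
  have roots: "{y \<in> {0..<p}. [y^2 = a] (mod p)} = {0}"
  proof safe
    fix y assume y: "y \<in> {0..<p}" "[y^2 = a] (mod p)"
    then have "p dvd y"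
      using True assms(1) by (metis cong_0_iff cong_trans prime_dvd_power)
    with y(1) show "y = 0"
      using zdvd_not_zless[of y p] by force
  qed (use True assms in \<open>auto simp: cong_sym\<close>)
  show ?thesis
    unfolding roots using True by (simp add: Legendre_def)
next
  case nonzero: False
  show ?thesis
  proof (cases "QuadRes p a")
    case False
    then have roots: "{y \<in> {0..<p}. [y^2 = a] (mod p)} = {}"
      unfolding QuadRes_def by blast
    show ?thesis
      unfolding roots using nonzero False by (simp add: Legendre_def)
  next
    case True
    then obtain y where "[y^2 = a] (mod p)"
      unfolding QuadRes_def by blast
    define r where "r = y mod p"
    have "[r = y] (mod p)"
      unfolding r_def by simp
    then have "[r^2 = y^2] (mod p)"
      by (rule cong_pow)
    then have r: "[r^2 = a] (mod p)"
      using \<open>[y^2 = a] (mod p)\<close> by (rule cong_trans)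
    have "0 \<le> r" "r < p"
      unfolding r_def using assms(2) by simp_all
    moreover have "r \<noteq> 0"
      using r nonzero cong_sym by force
    ultimately have r_range: "0 < r" "r < p"
      by simp_all
    have roots: "{y \<in> {0..<p}. [y^2 = a] (mod p)} = {r, p - r}"
    proof safe
      fix y assume y: "y \<in> {0..<p}" "[y^2 = a] (mod p)" "y \<noteq> r"
      have "[y^2 = r^2] (mod p)"
        using y(2) r by (metis cong_sym cong_trans)
      then have "p dvd (y - r) * (y + r)"
        by (simp add: cong_iff_dvd_diff power2_eq_square algebra_simps)
      then consider "p dvd y - r" | "p dvd y + r"
        using assms(1) prime_dvd_mult_iff by blast
      then show "y = p - r"
      proof cases
        case 1
        then have "y = r"
          using y(1) r_range by (intro cong_less_imp_eq_int) (simp_all add: cong_iff_dvd_diff)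
        with y(3) show ?thesis
          by contradiction
      next
        case 2
        then have "p dvd y - (p - r)"
          using dvd_diff[OF 2 dvd_refl[of p]] by (simp add: algebra_simps)
        then show "y = p - r"
          using y(1) r_range by (intro cong_less_imp_eq_int) (simp_all add: cong_iff_dvd_diff)
      qed
    next
      have "[(p - r)^2 = r^2] (mod p)"
        by (simp add: cong_iff_dvd_diff power2_eq_square algebra_simps)
      then show "[(p - r)^2 = a] (mod p)"
        using r by (rule cong_trans)
    qed (use r r_range in auto)
    moreover have "r \<noteq> p - r"
    proof
      assume "r = p - r"
      then have "even p"
        by presburger
      with assms show False
        using prime_odd_int by blast
    qed
    ultimately show ?thesis
      using nonzero True by (simp add: Legendre_def)
  qed
qed

lemma legendre_curve_card_eq:
  fixes p lam :: int
  assumes "prime p" "2 < p"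
  shows "int (legendre_curve_card p lam) = p + 1 + (\<Sum>x\<in>{0..<p}. Legendre (x * (x - 1) * (x - lam)) p)"
proof -
  let ?roots = "\<lambda>x. {y \<in> {0..<p}. [y^2 = x * (x - 1) * (x - lam)] (mod p)}"
  have "{(x, y). x \<in> {0..<p} \<and> y \<in> {0..<p} \<and> [y^2 = x * (x - 1) * (x - lam)] (mod p)}
      = Sigma {0..<p} ?roots"
    by auto
  moreover have "card (Sigma {0..<p} ?roots) = (\<Sum>x\<in>{0..<p}. card (?roots x))"
    by (rule card_SigmaI) (auto intro: finite_subset[of _ "{0..<p}"])
  ultimately have "legendre_curve_card p lam = (\<Sum>x\<in>{0..<p}. card (?roots x)) + 1"
    unfolding legendre_curve_card_def by simp
  then have "int (legendre_curve_card p lam) = (\<Sum>x\<in>{0..<p}. 1 + Legendre (x * (x - 1) * (x - lam)) p) + 1"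
    using card_square_roots_mod_prime[OF assms] by simp
  then show ?thesis
    using assms(2) by (simp add: sum.distrib)
qed

lemma coprime_if_prime_less:
  fixes p x :: int
  assumes "prime p" "0 < x" "x < p"
  shows "coprime x p"
  using assms by (metis coprime_commute prime_imp_coprime zdvd_not_zless)

lemma sum_affine_mod_reindex:
  fixes p u c :: int
  assumes "0 < p" "coprime u p"
  shows "(\<Sum>x\<in>{0..<p}. F ((u * x + c) mod p)) = (\<Sum>x\<in>{0..<p}. F x)"
proof (rule sum.reindex_bij_witness[where i = "\<lambda>w. (modular_inverse p u * (w - c)) mod p" and j = "\<lambda>x. (u * x + c) mod p"])
  let ?v = "modular_inverse p u"
  have inv: "[u * ?v = 1] (mod p)" "[?v * u = 1] (mod p)"
    using assms(2) by (simp_all add: cong_modular_inverse1 cong_modular_inverse2)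
  fix x :: int assume x: "x \<in> {0..<p}"
  have "[?v * ((u * x + c) mod p - c) = ?v * ((u * x + c) - c)] (mod p)"
    by (intro cong_mult cong_diff cong_refl) simp
  also have "?v * ((u * x + c) - c) = ?v * u * x"
    by (simp add: algebra_simps)
  also have "[?v * u * x = 1 * x] (mod p)"
    using inv by (intro cong_mult cong_refl)
  finally show "?v * ((u * x + c) mod p - c) mod p = x"
    using x by (simp add: cong_def)
  show "(u * x + c) mod p \<in> {0..<p}"
    using assms(1) by simp
next
  let ?v = "modular_inverse p u"
  have inv: "[u * ?v = 1] (mod p)"
    using assms(2) by (simp add: cong_modular_inverse1)
  fix w :: int assume w: "w \<in> {0..<p}"
  have "[u * (?v * (w - c) mod p) + c = u * ?v * (w - c) + c] (mod p)"
    by (intro cong_add cong_refl) (simp add: cong_mult mult.assoc)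
  also have "[u * ?v * (w - c) + c = 1 * (w - c) + c] (mod p)"
    using inv by (intro cong_add cong_mult cong_refl)
  finally show "(u * (?v * (w - c) mod p) + c) mod p = w"
    using w by (simp add: cong_def)
  show "?v * (w - c) mod p \<in> {0..<p}"
    using assms(1) by simp
qed simp

lemma sum_modular_inverse_reindex:
  fixes p :: int
  assumes "prime p"
  shows "(\<Sum>x\<in>{1..<p}. F (modular_inverse p x)) = (\<Sum>x\<in>{1..<p}. F x)"
proof -
  have unit: "coprime x p" if "x \<in> {1..<p}" for x
    using that assms by (simp add: coprime_if_prime_less)
  have mem: "modular_inverse p x \<in> {1..<p}" if "x \<in> {1..<p}" for x
    using that unit[OF that] prime_gt_1_int[OF assms]
      mult_modular_inverse_int_pos[of p x] modular_inverse_int_less[of p x] by auto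
  have invol: "modular_inverse p (modular_inverse p x) = x" if "x \<in> {1..<p}" for x
    using that unit[OF that] by (intro modular_inverse_int_eqI) (auto intro: cong_modular_inverse2)
  show ?thesis
    by (rule sum.reindex_bij_witness[where i = "modular_inverse p" and j = "modular_inverse p"])
      (use mem invol in auto)
qed

lemma sum_Legendre_quartic_eq_cubic:
  fixes p :: int
  assumes "prime p" "2 < p"
  shows "(\<Sum>d\<in>{0..<p}. Legendre (d * (d + 1) * (d + 2) * (d + 3)) p)
       = (\<Sum>x\<in>{0..<p}. Legendre ((1 + x) * (1 + 2 * x) * (1 + 3 * x)) p) - 1"
proof -
  define g where "g d = d * (d + 1) * (d + 2) * (d + 3)" for d :: int
  define h where "h x = (1 + x) * (1 + 2 * x) * (1 + 3 * x)" for x :: int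
  have inverted: "Legendre (g d) p = Legendre (h (modular_inverse p d)) p" if d: "d \<in> {1..<p}" for d
  proof -
    define x where "x = modular_inverse p d"
    have "coprime d p"
      using d assms(1) by (simp add: coprime_if_prime_less)
    then have inv: "[x * d = 1] (mod p)" and "coprime x p"
      unfolding x_def by (simp_all add: cong_modular_inverse2)
    have "\<not> p dvd x"
    proof
      assume "p dvd x"
      with \<open>coprime x p\<close> have "is_unit p"
        by (rule coprime_common_divisor) simp
      with assms(1) show False
        using not_prime_unit by blast
    qed
    have "[(x * d) * (x * d + x) * (x * d + 2 * x) * (x * d + 3 * x) = 1 * (1 + x) * (1 + 2 * x) * (1 + 3 * x)] (mod p)"
      using inv by (intro cong_mult cong_add cong_refl)
    moreover have "(x * d) * (x * d + x) * (x * d + 2 * x) * (x * d + 3 * x) = (x^2)^2 * g d"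
      by (simp add: g_def power2_eq_square algebra_simps)
    ultimately have "[(x^2)^2 * g d = h x] (mod p)"
      by (simp add: h_def)
    have "Legendre (g d) p = Legendre ((x^2)^2 * g d) p"
      using \<open>\<not> p dvd x\<close> assms by (intro Legendre_square_mult[symmetric]) (auto simp: prime_dvd_power_iff)
    also have "\<dots> = Legendre (h x) p"
      using \<open>[(x^2)^2 * g d = h x] (mod p)\<close> by (rule Legendre_cong)
    finally show ?thesis
      by (simp add: x_def)
  qed
  have split: "{0..<p} = insert 0 {1..<p}"
    using assms(2) by auto
  have "(\<Sum>d\<in>{0..<p}. Legendre (g d) p) = (\<Sum>d\<in>{1..<p}. Legendre (g d) p)"
    unfolding split by (simp add: g_def Legendre_def)
  also have "\<dots> = (\<Sum>d\<in>{1..<p}. Legendre (h (modular_inverse p d)) p)"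
    using inverted by simp
  also have "\<dots> = (\<Sum>x\<in>{1..<p}. Legendre (h x) p)"
    using assms(1) by (rule sum_modular_inverse_reindex)
  also have "\<dots> = (\<Sum>x\<in>{0..<p}. Legendre (h x) p) - 1"
    unfolding split using assms(2) by (simp add: h_def Legendre_one)
  finally show ?thesis
    by (simp add: g_def h_def)
qed

lemma sum_Legendre_cubic_eq_legendre_form:
  fixes p b :: int
  assumes "prime p" "3 < p" "[2 * b = 1] (mod p)"
  shows "(\<Sum>x\<in>{0..<p}. Legendre ((1 + x) * (1 + 2 * x) * (1 + 3 * x)) p)
       = (\<Sum>w\<in>{0..<p}. Legendre (w * (w - 1) * (w - 3 * b^2)) p)"
proof -
  have half: "p dvd 2 * b - 1"
    using assms(3) by (simp add: cong_iff_dvd_diff)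
  have "\<not> p dvd b"
  proof
    assume "p dvd b"
    then have "p dvd 2 * b"
      by simp
    then have "p dvd 2 * b - (2 * b - 1)"
      using half by (rule dvd_diff)
    also have "2 * b - (2 * b - 1) = 1"
      by simp
    finally have "p dvd 1" .
    with assms(1) show False
      using not_prime_unit by blast
  qed
  moreover have "\<not> p dvd 3"
    using assms(2) zdvd_imp_le by fastforce
  ultimately have "\<not> p dvd 3 * b" and "\<not> p dvd 3 * b^2"
    using assms(1) by (auto simp: prime_dvd_mult_iff prime_dvd_power_iff)
  define E where "E w = w * (w - 1) * (w - 3 * b^2)" for w
  define h where "h x = (1 + x) * (1 + 2 * x) * (1 + 3 * x)" for x :: int
  have shifted: "Legendre (E ((3 * b * x + 3 * b) mod p)) p = Legendre (h x) p" for x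
  proof -
    define w where "w = (3 * b * x + 3 * b) mod p"
    have w0: "[w = 3 * b * (x + 1)] (mod p)"
      unfolding w_def by (simp add: algebra_simps)
    have "[3 * b * (x + 1) - 1 = b * (3 * x + 1)] (mod p)"
      using half by (simp add: cong_iff_dvd_diff algebra_simps)
    with cong_diff[OF w0 cong_refl] have w1: "[w - 1 = b * (3 * x + 1)] (mod p)"
      by (rule cong_trans)
    have "3 * b * (x + 1) - 3 * b^2 - 3 * b^2 * (2 * x + 1) = (2 * b - 1) * (- 3 * b * (x + 1))"
      by (simp add: algebra_simps power2_eq_square)
    then have "[3 * b * (x + 1) - 3 * b^2 = 3 * b^2 * (2 * x + 1)] (mod p)"
      using half by (simp add: cong_iff_dvd_diff)
    with cong_diff[OF w0 cong_refl] have w2: "[w - 3 * b^2 = 3 * b^2 * (2 * x + 1)] (mod p)"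
      by (rule cong_trans)
    have "[E w = (3 * b * (x + 1)) * (b * (3 * x + 1)) * (3 * b^2 * (2 * x + 1))] (mod p)"
      unfolding E_def using w0 w1 w2 by (intro cong_mult)
    also have "(3 * b * (x + 1)) * (b * (3 * x + 1)) * (3 * b^2 * (2 * x + 1)) = (3 * b^2)^2 * h x"
      by (simp add: h_def algebra_simps power2_eq_square)
    finally have "Legendre (E w) p = Legendre ((3 * b^2)^2 * h x) p"
      by (rule Legendre_cong)
    also have "\<dots> = Legendre (h x) p"
      using \<open>\<not> p dvd 3 * b^2\<close> assms(1,2) by (intro Legendre_square_mult) auto
    finally show ?thesis
      by (simp add: w_def)
  qed
  have "coprime (3 * b) p"
    using prime_imp_coprime[OF assms(1) \<open>\<not> p dvd 3 * b\<close>] by (simp add: coprime_commute)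
  then have "(\<Sum>w\<in>{0..<p}. Legendre (E w) p) = (\<Sum>x\<in>{0..<p}. Legendre (E ((3 * b * x + 3 * b) mod p)) p)"
    using assms(2) by (intro sum_affine_mod_reindex[symmetric]) auto
  also have "\<dots> = (\<Sum>x\<in>{0..<p}. Legendre (h x) p)"
    using shifted by simp
  finally show ?thesis
    by (simp add: E_def h_def)
qed

theorem lemma6p5:
  fixes q b p :: int
  assumes "q \<ge> 5" and "coprime q 6"
    and "[2 * b = 1] (mod q)"
    and "prime p" and "p dvd q"
  shows "(\<Sum>d\<in>{0..<p}. Legendre (d * (d + 1) * (d + 2) * (d + 3)) p)
         = - ((p + 1 - int (legendre_curve_card p (3 * b^2))) + 1)"
proof -
  have "\<not> p dvd 6"
  proof
    assume "p dvd 6"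
    with assms(5) have "is_unit p"
      by (rule coprime_common_divisor[OF assms(2)])
    with assms(4) show False
      using not_prime_unit by blast
  qed
  then have "p \<noteq> 2" "p \<noteq> 3"
    by auto
  with prime_gt_1_int[OF assms(4)] have "3 < p"
    by linarith
  moreover have "[2 * b = 1] (mod p)"
    using assms(3,5) by (rule cong_dvd_modulus)
  ultimately show ?thesis
    using assms(4) sum_Legendre_quartic_eq_cubic sum_Legendre_cubic_eq_legendre_form
      legendre_curve_card_eq[of p "3 * b^2"]
    by simp
qed

end
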